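(* Let $B\in\mathbb{R}^{n\times n}$ be symmetric, partitioned into $p\times p$ blocks $B_{st}\in\mathbb{R}^{n_s\times n_t}$. Let $\check B$ be its strictly block lower triangular part ($\check B_{st}=B_{st}$ if $s>t$, $0$ otherwise) and $\hat B$ its strictly block upper triangular part ($\hat B_{st}=B_{st}$ if $s<t$, $0$ otherwise). Then for every $\eta\in\mathbb{C}^n$ with $\|\eta\|=1$, $$-\rho(B)\le\mathrm{Re}(\eta^H\check B\eta)\le\rho(B)\quad\text{and}\quad -\rho(B)\le\mathrm{Re}(\eta^H\hat B\eta)\le\rho(B).$$
   Context: $n_1,\dots,n_p$ are positive integers with $\sum_sn_s=n$. $\rho(B)$ is the spectral radius of $B$, and $\eta^H$ is the conjugate transpose. *)

theory Defs
  imports "Jordan_Normal_Form.Spectral_Radius"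
begin

text \<open>Block index (0-based) of row/column index i for block sizes ns = [n_1,...,n_p]:
  the unique s with n_1+...+n_s \<le> i < n_1+...+n_(s+1).\<close>
definition block_of :: "nat list \<Rightarrow> nat \<Rightarrow> nat" where
  "block_of ns i = (LEAST s. i < sum_list (take (Suc s) ns))"

definition block_lower :: "nat list \<Rightarrow> real mat \<Rightarrow> real mat" where
  "block_lower ns B = mat (dim_row B) (dim_col B)
     (\<lambda>(i,j). if block_of ns i > block_of ns j then B $$ (i,j) else 0)"

definition block_upper :: "nat list \<Rightarrow> real mat \<Rightarrow> real mat" where
  "block_upper ns B = mat (dim_row B) (dim_col B)
     (\<lambda>(i,j). if block_of ns i < block_of ns j then B $$ (i,j) else 0)"

definition herm_form :: "real mat \<Rightarrow> complex vec \<Rightarrow> complex" where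
  "herm_form M v = (\<Sum>i<dim_vec v. \<Sum>j<dim_vec v. cnj (v $ i) * complex_of_real (M $$ (i,j)) * v $ j)"

end

theory Submission
  imports Defs
begin

text \<open>
  For real symmetric \<open>B\<close> and real \<open>x\<close> we show \<open>|x\<^sup>T B x| \<le> \<rho>(B) |x|\<^sup>2\<close> without the
  spectral theorem. The sequence \<open>s m = |B\<^sup>m x|\<^sup>2\<close> is log-convex, because by symmetry
  \<open>s (m+1) = \<langle>B\<^sup>m x, B\<^sup>m\<^sup>+\<^sup>2 x\<rangle>\<close> and Cauchy-Schwarz applies; and for every \<open>r > \<rho>(B)\<close> it
  grows at most like \<open>r\<^sup>2\<^sup>m\<close>, since the powers of \<open>B / r\<close> stay bounded. Together these force
  \<open>s 1 \<le> r\<^sup>2 s 0\<close>, that is \<open>|B x| \<le> r |x|\<close>.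

  By symmetry the strictly block lower and upper parts of \<open>B\<close> have the same quadratic form
  \<open>L\<close>, and \<open>x\<^sup>T B x = 2L + D\<close>, where \<open>D\<close> is the sum of the forms of \<open>B\<close> at the
  restrictions of \<open>x\<close> to the single blocks. Both \<open>x\<^sup>T B x\<close> and \<open>D\<close> lie in
  \<open>[-\<rho>(B) |x|\<^sup>2, \<rho>(B) |x|\<^sup>2]\<close>, hence so does \<open>L\<close>. Finally \<open>Re(\<eta>\<^sup>H M \<eta>)\<close> is the
  sum of the real forms of \<open>M\<close> at \<open>Re \<eta>\<close> and \<open>Im \<eta>\<close>. Only the assignment of indices
  to blocks matters, not the block sizes.
\<close>


lemma smult_pow_mat:
  assumes "A \<in> carrier_mat n n"
  shows "(c \<cdot>\<^sub>m A) ^\<^sub>m k = c ^ k \<cdot>\<^sub>m (A ^\<^sub>m k :: 'a :: comm_semiring_1 mat)"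
proof (induct k)
  case (Suc k)
  have "(c \<cdot>\<^sub>m A) ^\<^sub>m Suc k = (c ^ k \<cdot>\<^sub>m A ^\<^sub>m k) * (c \<cdot>\<^sub>m A)" using Suc by simp
  also have "\<dots> = c ^ Suc k \<cdot>\<^sub>m A ^\<^sub>m Suc k"
    using assms by (intro eq_matI) (auto simp: ac_simps)
  finally show ?case .
qed (use assms in \<open>auto intro!: eq_matI\<close>)

lemma pow_mat_Suc_left:
  assumes "A \<in> carrier_mat n n"
  shows "A ^\<^sub>m Suc k = A * A ^\<^sub>m k"
proof (induct k)
  case (Suc k)
  have "A ^\<^sub>m Suc (Suc k) = (A * A ^\<^sub>m k) * A" using Suc by simp
  also have "\<dots> = A * A ^\<^sub>m Suc k" using assms by (simp add: assoc_mult_mat[of _ n n _ n])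
  finally show ?case .
qed (use assms in simp)

lemma mult_mat_vec_smult_mat:
  assumes "A \<in> carrier_mat n n" "v \<in> carrier_vec n"
  shows "(c \<cdot>\<^sub>m A) *\<^sub>v v = c \<cdot>\<^sub>v (A *\<^sub>v v :: 'a :: comm_semiring_1 vec)"
  using assms by (intro eq_vecI) auto

lemma eigenvector_smult_mat:
  assumes "A \<in> carrier_mat n n" "eigenvector A v ev"
  shows "eigenvector (c \<cdot>\<^sub>m A) v (c * ev)"
  using assms by (auto simp: eigenvector_def mult_mat_vec_smult_mat smult_smult_assoc)

lemma spectral_radius_nonneg:
  assumes "A \<in> carrier_mat n n" "n > 0"
  shows "0 \<le> spectral_radius A"
  using spectral_radius_mem_max(1)[OF assms] by auto

lemma spectral_radius_smult_mat_le:
  assumes A: "A \<in> carrier_mat n n" and n: "n > 0" and c: "c \<noteq> 0"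
  shows "spectral_radius (c \<cdot>\<^sub>m A) \<le> norm c * spectral_radius A"
proof -
  have cA: "c \<cdot>\<^sub>m A \<in> carrier_mat n n" using A by simp
  obtain ev where ev: "eigenvalue (c \<cdot>\<^sub>m A) ev" and rho: "spectral_radius (c \<cdot>\<^sub>m A) = norm ev"
    using spectral_radius_mem_max(1)[OF cA n] by (auto simp: spectrum_def)
  have "inverse c \<cdot>\<^sub>m (c \<cdot>\<^sub>m A) = A"
    using c by (intro eq_matI) auto
  with ev eigenvector_smult_mat[OF cA, of _ ev "inverse c"]
  have "eigenvalue A (inverse c * ev)" by (auto simp: eigenvalue_def)
  then have "norm (inverse c * ev) \<le> spectral_radius A"
    by (intro spectral_radius_mem_max(2)[OF A n]) (auto simp: spectrum_def)
  moreover have "norm ev = norm c * norm (inverse c * ev)"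
    using c by (simp add: norm_mult norm_inverse)
  ultimately show ?thesis
    unfolding rho by (simp add: mult_left_mono)
qed

lemma pow_mat_entry_bound:
  fixes A :: "complex mat"
  assumes A: "A \<in> carrier_mat n n" and n: "n > 0" and r: "spectral_radius A < r"
  obtains c where "\<And>k i j. i < n \<Longrightarrow> j < n \<Longrightarrow> norm ((A ^\<^sub>m k) $$ (i,j)) \<le> c * r ^ k"
proof -
  have r0: "r > 0"
    using spectral_radius_nonneg[OF A n] r by linarith
  let ?c = "complex_of_real (inverse r)"
  have "spectral_radius (?c \<cdot>\<^sub>m A) \<le> inverse r * spectral_radius A"
    using spectral_radius_smult_mat_le[OF A n, of ?c] r0 by (simp add: norm_inverse)
  also have "\<dots> < 1"
    using r r0 by (simp add: field_simps)
  finally obtain c where c: "\<And>k. norm_bound ((?c \<cdot>\<^sub>m A) ^\<^sub>m k) c"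
    using spectral_radius_jnf_norm_bound_less_1_upper_triangular[of "?c \<cdot>\<^sub>m A" n] A by auto
  show ?thesis
  proof
    fix k i j assume "i < n" "j < n"
    then have "norm (?c ^ k * (A ^\<^sub>m k) $$ (i,j)) \<le> c"
      using c[of k] A by (auto simp: smult_pow_mat norm_bound_def)
    moreover have "norm ((A ^\<^sub>m k) $$ (i,j)) = r ^ k * norm (?c ^ k * (A ^\<^sub>m k) $$ (i,j))"
      using r0 by (simp add: norm_mult norm_power norm_inverse flip: power_mult_distrib)
    ultimately show "norm ((A ^\<^sub>m k) $$ (i,j)) \<le> c * r ^ k"
      using r0 by (simp add: mult_left_mono mult.commute)
  qed
qed

lemma real_pow_mat_entry_bound:
  fixes B :: "real mat"
  assumes B: "B \<in> carrier_mat n n" and n: "n > 0"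
    and r: "spectral_radius (map_mat complex_of_real B) < r"
  obtains c where "\<And>k i j. i < n \<Longrightarrow> j < n \<Longrightarrow> \<bar>(B ^\<^sub>m k) $$ (i,j)\<bar> \<le> c * r ^ k"
proof -
  obtain c where c: "\<And>k i j. i < n \<Longrightarrow> j < n \<Longrightarrow>
      norm ((map_mat complex_of_real B ^\<^sub>m k) $$ (i,j)) \<le> c * r ^ k"
    using pow_mat_entry_bound[of "map_mat complex_of_real B" n r] B n r by auto
  show ?thesis
  proof
    fix k i j assume "i < n" "j < n"
    then show "\<bar>(B ^\<^sub>m k) $$ (i,j)\<bar> \<le> c * r ^ k"
      using c[of i j k] B by (simp flip: of_real_hom.mat_hom_pow)
  qed
qed

lemma sum_product_square_le:
  fixes x y :: "'a \<Rightarrow> real"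
  shows "(\<Sum>i\<in>I. x i * y i)\<^sup>2 \<le> (\<Sum>i\<in>I. x i * x i) * (\<Sum>i\<in>I. y i * y i)"
proof -
  have "0 \<le> (\<Sum>i\<in>I. \<Sum>j\<in>I. (x i * y j - x j * y i)\<^sup>2)"
    by (intro sum_nonneg) auto
  also have "\<dots> = (\<Sum>i\<in>I. \<Sum>j\<in>I. (x i * x i) * (y j * y j))
      + (\<Sum>i\<in>I. \<Sum>j\<in>I. (x j * x j) * (y i * y i))
      - 2 * (\<Sum>i\<in>I. \<Sum>j\<in>I. (x i * y i) * (x j * y j))"
    by (simp add: power2_eq_square algebra_simps sum_subtractf sum.distrib sum_distrib_left)
  also have "\<dots> = 2 * ((\<Sum>i\<in>I. x i * x i) * (\<Sum>i\<in>I. y i * y i) - (\<Sum>i\<in>I. x i * y i)\<^sup>2)"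
    by (subst (2) sum.swap) (simp add: sum_product power2_eq_square algebra_simps)
  finally show ?thesis by simp
qed

lemma scalar_prod_square_le:
  fixes x y :: "real vec"
  assumes "x \<in> carrier_vec n" "y \<in> carrier_vec n"
  shows "(x \<bullet> y)\<^sup>2 \<le> (x \<bullet> x) * (y \<bullet> y)"
  using assms by (simp add: scalar_prod_def sum_product_square_le)

lemma scalar_prod_self_nonneg: "0 \<le> (x :: real vec) \<bullet> x"
  unfolding scalar_prod_def by (intro sum_nonneg) auto

lemma symmetric_mat_scalar_prod:
  fixes B :: "'a :: comm_semiring_0 mat"
  assumes "B \<in> carrier_mat n n" "transpose_mat B = B" "x \<in> carrier_vec n" "y \<in> carrier_vec n"
  shows "(B *\<^sub>v x) \<bullet> y = x \<bullet> (B *\<^sub>v y)"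
  using transpose_vec_mult_scalar[of B n n y x] assms by simp

lemma mult_mat_vec_entry_bound:
  fixes A :: "real mat"
  assumes "A \<in> carrier_mat n n" "x \<in> carrier_vec n" "i < n"
    and "\<And>j. j < n \<Longrightarrow> \<bar>A $$ (i,j)\<bar> \<le> c"
  shows "\<bar>(A *\<^sub>v x) $ i\<bar> \<le> c * (\<Sum>j<n. \<bar>x $ j\<bar>)"
proof -
  have "\<bar>(A *\<^sub>v x) $ i\<bar> = \<bar>\<Sum>j<n. A $$ (i,j) * x $ j\<bar>"
    using assms by (simp add: scalar_prod_def atLeast0LessThan)
  also have "\<dots> \<le> (\<Sum>j<n. c * \<bar>x $ j\<bar>)"
    by (rule order_trans[OF sum_abs]) (auto simp: abs_mult intro!: sum_mono mult_right_mono assms)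
  finally show ?thesis by (simp add: sum_distrib_left)
qed

lemma log_convex_ratio_le_geometric_rate:
  fixes s :: "nat \<Rightarrow> real"
  assumes log_convex: "\<And>m. (s (Suc m))\<^sup>2 \<le> s m * s (Suc (Suc m))"
    and s0: "s 0 > 0" and bound: "\<And>m. s m \<le> K * R ^ m" and R: "R > 0"
  shows "s 1 \<le> R * s 0"
proof (rule ccontr)
  define t where "t = s 1 / s 0"
  assume "\<not> s 1 \<le> R * s 0"
  then have t: "t > R" using s0 unfolding t_def by (simp add: field_simps)
  have step: "t * s m \<le> s (Suc m) \<and> s m > 0" for m
  proof (induct m)
    case 0 then show ?case using s0 unfolding t_def by simp
  next
    case (Suc m)
    then have le: "t * s m \<le> s (Suc m)" and pos: "s m > 0" by auto
    have pos': "s (Suc m) > 0" using le pos t R by (smt (verit) mult_pos_pos)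
    have "s m * (t * s (Suc m)) \<le> s (Suc m) * s (Suc m)"
      using le pos' by (simp add: mult_right_mono ac_simps)
    also have "\<dots> \<le> s m * s (Suc (Suc m))" using log_convex[of m] by (simp add: power2_eq_square)
    finally show ?case using pos pos' by simp
  qed
  have geometric: "t ^ m * s 0 \<le> s m" for m
  proof (induct m)
    case (Suc m)
    have "t ^ Suc m * s 0 \<le> t * s m" using Suc t R by (simp add: mult_left_mono)
    also have "\<dots> \<le> s (Suc m)" using step[of m] by simp
    finally show ?case .
  qed simp
  obtain m where m: "K / s 0 < (t / R) ^ m"
    using real_arch_pow[of "t / R"] t R by auto
  have "t ^ m * s 0 \<le> K * R ^ m" using geometric[of m] bound[of m] by linarith
  then have "(t / R) ^ m \<le> K / s 0" using s0 R by (simp add: power_divide field_simps)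
  with m show False by simp
qed

lemma pow_mat_vec_growth:
  fixes B :: "real mat"
  assumes B: "B \<in> carrier_mat n n" and x: "x \<in> carrier_vec n"
    and r: "spectral_radius (map_mat complex_of_real B) < r" and n: "n > 0"
  obtains K where "\<And>m. (B ^\<^sub>m m *\<^sub>v x) \<bullet> (B ^\<^sub>m m *\<^sub>v x) \<le> K * (r\<^sup>2) ^ m"
proof -
  obtain c where c: "\<And>k i j. i < n \<Longrightarrow> j < n \<Longrightarrow> \<bar>(B ^\<^sub>m k) $$ (i,j)\<bar> \<le> c * r ^ k"
    using real_pow_mat_entry_bound[OF B n r] by blast
  define U where "U = (\<Sum>j<n. \<bar>x $ j\<bar>)"
  have "(B ^\<^sub>m m *\<^sub>v x) \<bullet> (B ^\<^sub>m m *\<^sub>v x) \<le> (real n * (c * U)\<^sup>2) * (r\<^sup>2) ^ m" for m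
  proof -
    let ?v = "B ^\<^sub>m m *\<^sub>v x"
    have "?v \<bullet> ?v = (\<Sum>i<n. (?v $ i)\<^sup>2)"
      using B by (simp add: scalar_prod_def atLeast0LessThan power2_eq_square)
    also have "\<dots> \<le> (\<Sum>i<n. (c * r ^ m * U)\<^sup>2)"
    proof (intro sum_mono)
      fix i assume "i \<in> {..<n}"
      then have "\<bar>?v $ i\<bar> \<le> c * r ^ m * U"
        unfolding U_def using B x c by (intro mult_mat_vec_entry_bound) auto
      then show "(?v $ i)\<^sup>2 \<le> (c * r ^ m * U)\<^sup>2"
        by (metis abs_ge_zero abs_le_square_iff abs_of_nonneg order_trans)
    qed
    also have "\<dots> = (real n * (c * U)\<^sup>2) * (r\<^sup>2) ^ m"
      by (simp add: power_mult_distrib ac_simps flip: power_mult)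
    finally show ?thesis .
  qed
  then show ?thesis by (rule that)
qed

lemma symmetric_pow_mat_vec_log_convex:
  fixes B :: "real mat"
  assumes B: "B \<in> carrier_mat n n" and sym: "transpose_mat B = B" and x: "x \<in> carrier_vec n"
  defines "s \<equiv> \<lambda>m. (B ^\<^sub>m m *\<^sub>v x) \<bullet> (B ^\<^sub>m m *\<^sub>v x)"
  shows "(s (Suc m))\<^sup>2 \<le> s m * s (Suc (Suc m))"
proof -
  define v where "v m = B ^\<^sub>m m *\<^sub>v x" for m
  have v: "v m \<in> carrier_vec n" for m
    unfolding v_def using B by (simp add: carrier_vecI)
  have v_Suc: "v (Suc m) = B *\<^sub>v v m" for m
    unfolding v_def pow_mat_Suc_left[OF B] using B x by (intro assoc_mult_mat_vec) auto
  have "s (Suc m) = v m \<bullet> v (Suc (Suc m))"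
    unfolding s_def v_def[symmetric]
    using symmetric_mat_scalar_prod[OF B sym v v, of m "Suc m"] by (simp add: v_Suc)
  then show ?thesis
    unfolding s_def v_def[symmetric] using scalar_prod_square_le[OF v v] by simp
qed

lemma symmetric_mult_mat_vec_norm_le:
  fixes B :: "real mat"
  assumes B: "B \<in> carrier_mat n n" and sym: "transpose_mat B = B" and x: "x \<in> carrier_vec n"
    and r: "spectral_radius (map_mat complex_of_real B) < r"
  shows "(B *\<^sub>v x) \<bullet> (B *\<^sub>v x) \<le> r\<^sup>2 * (x \<bullet> x)"
proof (cases "n = 0")
  case True
  then show ?thesis using B x by (simp add: scalar_prod_def)
next
  case False
  then have n: "n > 0" by simp
  then have r0: "r > 0"
    using spectral_radius_nonneg[of "map_mat complex_of_real B" n] B r by fastforce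
  define s where "s m = (B ^\<^sub>m m *\<^sub>v x) \<bullet> (B ^\<^sub>m m *\<^sub>v x)" for m
  have log_convex: "(s (Suc m))\<^sup>2 \<le> s m * s (Suc (Suc m))" for m
    unfolding s_def by (rule symmetric_pow_mat_vec_log_convex[OF B sym x])
  obtain K where K: "\<And>m. s m \<le> K * (r\<^sup>2) ^ m"
    using pow_mat_vec_growth[OF B x r n] unfolding s_def by blast
  have "s 1 \<le> r\<^sup>2 * s 0"
  proof (cases "s 0 = 0")
    case True
    then have "(s 1)\<^sup>2 \<le> 0\<^sup>2"
      using log_convex[of 0] by simp
    then show ?thesis
      using True by (simp add: power2_le_imp_le)
  next
    case False
    then have "s 0 > 0"
      using scalar_prod_self_nonneg[of "B ^\<^sub>m 0 *\<^sub>v x"] unfolding s_def by linarith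
    then show ?thesis
      using log_convex_ratio_le_geometric_rate[OF log_convex _ K] r0 by simp
  qed
  then show ?thesis
    unfolding s_def using B x by simp
qed

lemma symmetric_quadratic_form_le_rate:
  fixes B :: "real mat"
  assumes B: "B \<in> carrier_mat n n" and sym: "transpose_mat B = B" and x: "x \<in> carrier_vec n"
    and r: "spectral_radius (map_mat complex_of_real B) < r"
  shows "\<bar>x \<bullet> (B *\<^sub>v x)\<bar> \<le> r * (x \<bullet> x)"
proof (cases "n = 0")
  case True
  then show ?thesis using B x by (simp add: scalar_prod_def)
next
  case False
  then have r0: "r > 0"
    using spectral_radius_nonneg[of "map_mat complex_of_real B" n] B r by fastforce
  have "(x \<bullet> (B *\<^sub>v x))\<^sup>2 \<le> (x \<bullet> x) * ((B *\<^sub>v x) \<bullet> (B *\<^sub>v x))"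
    using B x by (intro scalar_prod_square_le) auto
  also have "\<dots> \<le> (x \<bullet> x) * (r\<^sup>2 * (x \<bullet> x))"
    using symmetric_mult_mat_vec_norm_le[OF assms] scalar_prod_self_nonneg[of x] by (rule mult_left_mono)
  finally have "\<bar>x \<bullet> (B *\<^sub>v x)\<bar>\<^sup>2 \<le> (r * (x \<bullet> x))\<^sup>2"
    by (simp add: power2_eq_square ac_simps)
  then show ?thesis
    by (rule power2_le_imp_le) (use r0 scalar_prod_self_nonneg[of x] in simp)
qed

lemma symmetric_quadratic_form_le:
  fixes B :: "real mat"
  assumes "B \<in> carrier_mat n n" "transpose_mat B = B" "x \<in> carrier_vec n"
  shows "\<bar>x \<bullet> (B *\<^sub>v x)\<bar> \<le> spectral_radius (map_mat complex_of_real B) * (x \<bullet> x)"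
proof (cases "x \<bullet> x = 0")
  case True
  then show ?thesis
    using symmetric_quadratic_form_le_rate[OF assms, of "spectral_radius (map_mat complex_of_real B) + 1"]
    by simp
next
  case False
  then have pos: "x \<bullet> x > 0" using scalar_prod_self_nonneg[of x] by simp
  have "\<bar>x \<bullet> (B *\<^sub>v x)\<bar> / (x \<bullet> x) \<le> spectral_radius (map_mat complex_of_real B)"
  proof (rule dense_ge)
    fix r assume "spectral_radius (map_mat complex_of_real B) < r"
    from symmetric_quadratic_form_le_rate[OF assms this]
    show "\<bar>x \<bullet> (B *\<^sub>v x)\<bar> / (x \<bullet> x) \<le> r"
      using pos by (simp add: divide_le_eq)
  qed
  then show ?thesis using pos by (simp add: divide_le_eq)
qed

lemma quadratic_form_eq_double_sum:
  fixes M :: "'a :: comm_semiring_0 mat"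
  assumes "M \<in> carrier_mat n n" "x \<in> carrier_vec n"
  shows "x \<bullet> (M *\<^sub>v x) = (\<Sum>i<n. \<Sum>j<n. M $$ (i,j) * (x $ i * x $ j))"
  using assms by (simp add: scalar_prod_def sum_distrib_left atLeast0LessThan ac_simps)

definition block_restrict :: "(nat \<Rightarrow> nat) \<Rightarrow> nat \<Rightarrow> 'a :: zero vec \<Rightarrow> 'a vec" where
  "block_restrict b s x = vec (dim_vec x) (\<lambda>i. if b i = s then x $ i else 0)"

lemma block_restrict_carrier [simp]: "x \<in> carrier_vec n \<Longrightarrow> block_restrict b s x \<in> carrier_vec n"
  by (simp add: block_restrict_def)

lemma sum_block_restrict_quadratic_form:
  fixes B :: "real mat"
  assumes B: "B \<in> carrier_mat n n" and x: "x \<in> carrier_vec n"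
  shows "(\<Sum>s\<in>b ` {..<n}. block_restrict b s x \<bullet> (B *\<^sub>v block_restrict b s x))
       = (\<Sum>i<n. \<Sum>j<n. if b i = b j then B $$ (i,j) * (x $ i * x $ j) else 0)"
proof -
  have "(\<Sum>s\<in>b ` {..<n}. block_restrict b s x \<bullet> (B *\<^sub>v block_restrict b s x))
      = (\<Sum>s\<in>b ` {..<n}. \<Sum>i<n. \<Sum>j<n. if b i = s \<and> b j = s then B $$ (i,j) * (x $ i * x $ j) else 0)"
    using B x by (auto simp: quadratic_form_eq_double_sum block_restrict_def intro!: sum.cong)
  also have "\<dots> = (\<Sum>i<n. \<Sum>j<n. \<Sum>s\<in>b ` {..<n}. if b i = s \<and> b j = s then B $$ (i,j) * (x $ i * x $ j) else 0)"
    by (subst sum.swap) (rule sum.cong[OF refl], rule sum.swap)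
  also have "\<dots> = (\<Sum>i<n. \<Sum>j<n. if b i = b j then B $$ (i,j) * (x $ i * x $ j) else 0)"
    by (intro sum.cong refl) (auto simp: sum.delta if_distrib[of "\<lambda>P. P \<and> _"] cong: if_cong)
  finally show ?thesis .
qed

lemma sum_block_restrict_scalar_prod_self:
  fixes x :: "real vec"
  assumes x: "x \<in> carrier_vec n"
  shows "(\<Sum>s\<in>b ` {..<n}. block_restrict b s x \<bullet> block_restrict b s x) = x \<bullet> x"
proof -
  have "(\<Sum>s\<in>b ` {..<n}. block_restrict b s x \<bullet> block_restrict b s x)
      = (\<Sum>i<n. \<Sum>s\<in>b ` {..<n}. if b i = s then x $ i * x $ i else 0)"
    using x by (subst sum.swap) (auto simp: scalar_prod_def block_restrict_def atLeast0LessThan intro!: sum.cong)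
  also have "\<dots> = x \<bullet> x"
    using x by (simp add: sum.delta scalar_prod_def atLeast0LessThan)
  finally show ?thesis .
qed

lemma strict_block_sum_swap:
  fixes B :: "real mat" and b :: "nat \<Rightarrow> nat"
  assumes B: "B \<in> carrier_mat n n" and sym: "transpose_mat B = B"
  shows "(\<Sum>i<n. \<Sum>j<n. if b i < b j then B $$ (i,j) * (x $ i * x $ j) else 0)
       = (\<Sum>i<n. \<Sum>j<n. if b j < b i then B $$ (i,j) * (x $ i * x $ j) else 0)"
proof -
  have "B $$ (i,j) = B $$ (j,i)" if "i < n" "j < n" for i j
    using B sym that by (metis carrier_matD index_transpose_mat(1))
  then show ?thesis
    by (subst sum.swap) (auto simp: ac_simps intro!: sum.cong)
qed

lemma strict_block_lower_form_le:
  fixes B :: "real mat" and b :: "nat \<Rightarrow> nat"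
  assumes B: "B \<in> carrier_mat n n" and sym: "transpose_mat B = B" and x: "x \<in> carrier_vec n"
  shows "\<bar>\<Sum>i<n. \<Sum>j<n. if b j < b i then B $$ (i,j) * (x $ i * x $ j) else 0\<bar>
       \<le> spectral_radius (map_mat complex_of_real B) * (x \<bullet> x)"
proof -
  let ?\<rho> = "spectral_radius (map_mat complex_of_real B)"
  let ?x = "\<lambda>s. block_restrict b s x"
  define f where "f i j = B $$ (i,j) * (x $ i * x $ j)" for i j
  define L where "L = (\<Sum>i<n. \<Sum>j<n. if b j < b i then f i j else 0)"
  define U where "U = (\<Sum>i<n. \<Sum>j<n. if b i < b j then f i j else 0)"
  define D where "D = (\<Sum>i<n. \<Sum>j<n. if b i = b j then f i j else 0)"
  have "x \<bullet> (B *\<^sub>v x) = (\<Sum>i<n. \<Sum>j<n. (if b i < b j then f i j else 0)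
      + (if b j < b i then f i j else 0) + (if b i = b j then f i j else 0))"
    unfolding quadratic_form_eq_double_sum[OF B x] f_def by (intro sum.cong refl) auto
  also have "\<dots> = U + L + D"
    unfolding U_def L_def D_def by (simp add: sum.distrib)
  also have "U = L"
    unfolding U_def L_def f_def by (rule strict_block_sum_swap[OF B sym])
  finally have split: "x \<bullet> (B *\<^sub>v x) = L + L + D" .
  have "\<bar>D\<bar> \<le> (\<Sum>s\<in>b ` {..<n}. \<bar>?x s \<bullet> (B *\<^sub>v ?x s)\<bar>)"
    unfolding D_def f_def sum_block_restrict_quadratic_form[OF B x, symmetric] by (rule sum_abs)
  also have "\<dots> \<le> (\<Sum>s\<in>b ` {..<n}. ?\<rho> * (?x s \<bullet> ?x s))"
    using x by (intro sum_mono symmetric_quadratic_form_le[OF B sym]) simp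
  also have "\<dots> = ?\<rho> * (x \<bullet> x)"
    by (simp add: sum_distrib_left[symmetric] sum_block_restrict_scalar_prod_self[OF x])
  finally have "\<bar>D\<bar> \<le> ?\<rho> * (x \<bullet> x)" .
  moreover have "\<bar>x \<bullet> (B *\<^sub>v x)\<bar> \<le> ?\<rho> * (x \<bullet> x)"
    by (rule symmetric_quadratic_form_le[OF B sym x])
  ultimately show ?thesis
    using split unfolding L_def f_def by linarith
qed

lemma block_lower_form_le:
  assumes B: "B \<in> carrier_mat n n" and sym: "transpose_mat B = B" and x: "x \<in> carrier_vec n"
  shows "\<bar>x \<bullet> (block_lower ns B *\<^sub>v x)\<bar> \<le> spectral_radius (map_mat complex_of_real B) * (x \<bullet> x)"
proof -
  have "block_lower ns B \<in> carrier_mat n n"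
    using B by (simp add: block_lower_def)
  then have "x \<bullet> (block_lower ns B *\<^sub>v x)
      = (\<Sum>i<n. \<Sum>j<n. if block_of ns j < block_of ns i then B $$ (i,j) * (x $ i * x $ j) else 0)"
    using B by (auto simp: quadratic_form_eq_double_sum[OF _ x] block_lower_def intro!: sum.cong)
  then show ?thesis
    using strict_block_lower_form_le[OF B sym x] by simp
qed

lemma block_upper_form_le:
  assumes B: "B \<in> carrier_mat n n" and sym: "transpose_mat B = B" and x: "x \<in> carrier_vec n"
  shows "\<bar>x \<bullet> (block_upper ns B *\<^sub>v x)\<bar> \<le> spectral_radius (map_mat complex_of_real B) * (x \<bullet> x)"
proof -
  have "block_upper ns B \<in> carrier_mat n n"
    using B by (simp add: block_upper_def)
  then have "x \<bullet> (block_upper ns B *\<^sub>v x)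
      = (\<Sum>i<n. \<Sum>j<n. if block_of ns i < block_of ns j then B $$ (i,j) * (x $ i * x $ j) else 0)"
    using B by (auto simp: quadratic_form_eq_double_sum[OF _ x] block_upper_def intro!: sum.cong)
  also have "\<dots> = (\<Sum>i<n. \<Sum>j<n. if block_of ns j < block_of ns i then B $$ (i,j) * (x $ i * x $ j) else 0)"
    by (rule strict_block_sum_swap[OF B sym])
  finally show ?thesis
    using strict_block_lower_form_le[OF B sym x] by simp
qed

lemma quadratic_form_map_vec:
  fixes M :: "real mat" and f :: "complex \<Rightarrow> real"
  assumes M: "M \<in> carrier_mat n n" and v: "dim_vec v = n"
  shows "map_vec f v \<bullet> (M *\<^sub>v map_vec f v) = (\<Sum>i<n. \<Sum>j<n. M $$ (i,j) * (f (v $ i) * f (v $ j)))"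
proof -
  have "map_vec f v \<in> carrier_vec n"
    using v by auto
  from quadratic_form_eq_double_sum[OF M this] show ?thesis
    using v by (auto intro!: sum.cong)
qed

lemma Re_herm_form:
  assumes M: "M \<in> carrier_mat n n" and v: "dim_vec v = n"
  shows "Re (herm_form M v) = map_vec Re v \<bullet> (M *\<^sub>v map_vec Re v) + map_vec Im v \<bullet> (M *\<^sub>v map_vec Im v)"
  unfolding quadratic_form_map_vec[OF M v] herm_form_def v Re_sum sum.distrib[symmetric]
  by (intro sum.cong refl) (simp add: algebra_simps)

lemma Re_herm_form_le:
  assumes M: "M \<in> carrier_mat n n" and v: "dim_vec v = n"
    and bound: "\<And>x. x \<in> carrier_vec n \<Longrightarrow> \<bar>x \<bullet> (M *\<^sub>v x)\<bar> \<le> c * (x \<bullet> x)"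
  shows "\<bar>Re (herm_form M v)\<bar> \<le> c * (\<Sum>i<n. (cmod (v $ i))\<^sup>2)"
proof -
  let ?u = "map_vec Re v" and ?w = "map_vec Im v"
  have carrier: "?u \<in> carrier_vec n" "?w \<in> carrier_vec n"
    using v by auto
  have "?u \<bullet> ?u + ?w \<bullet> ?w = (\<Sum>i<n. Re (v $ i) * Re (v $ i) + Im (v $ i) * Im (v $ i))"
    unfolding scalar_prod_def sum.distrib[symmetric] using v by (auto simp: atLeast0LessThan)
  also have "\<dots> = (\<Sum>i<n. (cmod (v $ i))\<^sup>2)"
    unfolding cmod_power2 by (simp add: power2_eq_square)
  finally have norm: "(\<Sum>i<n. (cmod (v $ i))\<^sup>2) = ?u \<bullet> ?u + ?w \<bullet> ?w" ..
  have "\<bar>Re (herm_form M v)\<bar> \<le> \<bar>?u \<bullet> (M *\<^sub>v ?u)\<bar> + \<bar>?w \<bullet> (M *\<^sub>v ?w)\<bar>"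
    unfolding Re_herm_form[OF M v] by (rule abs_triangle_ineq)
  also have "\<dots> \<le> c * (?u \<bullet> ?u) + c * (?w \<bullet> ?w)"
    by (intro add_mono bound carrier)
  finally show ?thesis
    unfolding norm distrib_left .
qed

theorem lemma11:
  fixes B :: "real mat" and ns :: "nat list" and n :: nat and \<eta> :: "complex vec"
  assumes "B \<in> carrier_mat n n"
    and "transpose_mat B = B"
    and "\<forall>s\<in>set ns. s > 0"
    and "sum_list ns = n"
    and "dim_vec \<eta> = n"
    and "sqrt (\<Sum>i<n. (cmod (\<eta> $ i))\<^sup>2) = 1"
  shows "- spectral_radius (map_mat complex_of_real B) \<le> Re (herm_form (block_lower ns B) \<eta>)
       \<and> Re (herm_form (block_lower ns B) \<eta>) \<le> spectral_radius (map_mat complex_of_real B)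
       \<and> - spectral_radius (map_mat complex_of_real B) \<le> Re (herm_form (block_upper ns B) \<eta>)
       \<and> Re (herm_form (block_upper ns B) \<eta>) \<le> spectral_radius (map_mat complex_of_real B)"
proof -
  note B = assms(1) and sym = assms(2) and \<eta> = assms(5)
  have unit: "(\<Sum>i<n. (cmod (\<eta> $ i))\<^sup>2) = 1"
    using assms(6) by simp
  have "\<bar>Re (herm_form (block_lower ns B) \<eta>)\<bar> \<le> spectral_radius (map_mat complex_of_real B)"
    using Re_herm_form_le[OF _ \<eta> block_lower_form_le[OF B sym]] B unit
    by (simp add: block_lower_def)
  moreover have "\<bar>Re (herm_form (block_upper ns B) \<eta>)\<bar> \<le> spectral_radius (map_mat complex_of_real B)"
    using Re_herm_form_le[OF _ \<eta> block_upper_form_le[OF B sym]] B unit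
    by (simp add: block_upper_def)
  ultimately show ?thesis
    by (simp add: abs_le_iff)
qed

end
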